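(* Let $\sigma^2$ be any $d\times d$ symmetric positive definite matrix with eigenvalues $\lambda_1\ge\dots\ge\lambda_d>0$. Then $\sigma^2$ can be represented as $$\sigma^2=\sum_{J\in\mathcal J}\tilde g(J)JJ^T,$$ with $\tilde g(J)>0$, for a finite set $\mathcal J\subset\mathbb Z^d$ such that $e^{(i)}\in\mathcal J$ for $1\le i\le d$, such that $J\in\mathcal J$ implies $-J\in\mathcal J$ with $\tilde g(-J)=\tilde g(J)$, and such that $$\max_{J\in\mathcal J}\max_{1\le i\le d}|J_i|\le1+\tfrac12\sqrt{2(d-1)\rho(\sigma^2)}.$$ Furthermore $\tilde g(e^{(i)})\ge\frac14\lambda_d$ for each $1\le i\le d$.
   Context: $e^{(i)}$ denotes the $i$-th standard unit vector in $\mathbb R^d$, and $\rho(\sigma^2):=\lambda_1/\lambda_d$ is the condition number of $\sigma^2$. *)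

theory Defs
  imports "HOL-Analysis.Analysis"
begin

definition sym_pos_def_mat :: "real^'n^'n \<Rightarrow> bool" where
  "sym_pos_def_mat A \<longleftrightarrow> transpose A = A \<and> (\<forall>x. x \<noteq> 0 \<longrightarrow> x \<bullet> (A *v x) > 0)"

definition mat_eigenvalues :: "real^'n^'n \<Rightarrow> real set" where
  "mat_eigenvalues A = {c. \<exists>v. v \<noteq> 0 \<and> A *v v = c *s v}"

definition lambda_max :: "real^'n^'n \<Rightarrow> real" where
  "lambda_max A = Max (mat_eigenvalues A)"

definition lambda_min :: "real^'n^'n \<Rightarrow> real" where
  "lambda_min A = Min (mat_eigenvalues A)"

definition cond_number :: "real^'n^'n \<Rightarrow> real" where
  "cond_number A = lambda_max A / lambda_min A"

definition outer :: "real^'n \<Rightarrow> real^'n^'n" where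
  "outer J = (\<chi> i j. J$i * J$j)"

definition int_vec :: "real^'n \<Rightarrow> bool" where
  "int_vec J \<longleftrightarrow> (\<forall>i. J$i \<in> \<int>)"

end

theory Submission
  imports Defs
begin

text \<open>Let \<open>\<mu> = \<lambda>\<^sub>d\<close>. The matrix \<open>\<sigma>\<^sup>2 - \<mu> I\<close> is positive semidefinite, and symmetric Gaussian
  elimination writes it, one coordinate at a time, as a sum of rank-one matrices \<open>x x\<^sup>T\<close> plus a diagonal
  remainder, where \<open>\<bar>x\<^sub>j\<bar> \<le> \<surd>(\<lambda>\<^sub>1 - \<mu>)\<close>. Each \<open>x x\<^sup>T\<close> is replaced by the second moment of the
  independent randomised rounding \<open>J\<close> of \<open>s x\<close> to an integer vector, which is \<open>s\<^sup>2 x x\<^sup>T\<close> plus the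
  diagonal matrix of the coordinate variances, each at most \<open>1/4\<close>. The last coordinate needs no
  rounding, so the \<open>d - 1\<close> rounding steps lower the diagonal by at most \<open>(d - 1) / (4 s\<^sup>2)\<close>; for
  \<open>s\<^sup>2 = (d - 1) / (2 \<mu>)\<close> this is \<open>\<mu> / 2\<close>, absorbed by \<open>\<mu> I\<close>, while the entries of \<open>J\<close> stay below
  \<open>1 + s \<surd>\<lambda>\<^sub>1 = 1 + \<surd>(2 (d - 1) \<rho>) / 2\<close>. The remaining diagonal, at least \<open>\<mu> / 2\<close>, is spanned by the
  \<open>e\<^sup>(\<^sup>i\<^sup>) e\<^sup>(\<^sup>i\<^sup>)\<^sup>T\<close>, and averaging the weights of \<open>J\<close> and \<open>-J\<close> gives the symmetry and
  \<open>g(e\<^sup>(\<^sup>i\<^sup>)) \<ge> \<mu> / 4\<close>.\<close>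

section \<open>Positive semidefinite matrices\<close>

definition psd :: "real^'n^'n \<Rightarrow> bool" where
  "psd A \<longleftrightarrow> (\<forall>x. 0 \<le> x \<bullet> (A *v x))"

lemma inner_symmetric_matrix_commute:
  fixes A :: "real^'n^'n"
  assumes "transpose A = A"
  shows "x \<bullet> (A *v y) = y \<bullet> (A *v x)"
  by (metis assms dot_lmul_matrix inner_commute transpose_matrix_vector)

lemma quadratic_form_add_scaleR:
  fixes A :: "real^'n^'n"
  assumes "transpose A = A"
  shows "(z + t *\<^sub>R y) \<bullet> (A *v (z + t *\<^sub>R y)) =
    z \<bullet> (A *v z) + 2 * t * (y \<bullet> (A *v z)) + t\<^sup>2 * (y \<bullet> (A *v y))"
  using inner_symmetric_matrix_commute[OF assms, of z y]
  by (simp add: matrix_vector_right_distrib matrix_vector_mult_scaleR inner_add_left inner_add_right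
      algebra_simps power2_eq_square)

lemma matrix_axis_entry: "(A *v axis j 1) $ i = (A::real^'n^'n) $ i $ j"
  by (simp add: matrix_vector_mult_basis column_def)

lemma diagonal_entry_quadratic_form: "(A::real^'n^'n) $ j $ j = axis j 1 \<bullet> (A *v axis j 1)"
  by (simp add: inner_axis' matrix_axis_entry)

lemma symmetric_matrix_entry: "transpose A = A \<Longrightarrow> (A::real^'n^'n) $ i $ j = A $ j $ i"
  by (metis transpose_def vec_lambda_beta)

lemma transpose_diff: "transpose (A - B) = transpose A - transpose (B::'a::ab_group_add^'n^'m)"
  by (simp add: vec_eq_iff transpose_def)

lemma mat_vector_mult_eq_scaleR: "(mat k :: real^'n^'n) *v x = k *\<^sub>R x"
proof -
  have "(\<Sum>j\<in>UNIV. (if i = j then k else 0) * x $ j) = k * x $ i" for i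
    by (simp add: if_distrib[of "\<lambda>t. t * _"] cong: if_cong)
  then show ?thesis by (simp add: vec_eq_iff matrix_vector_mult_def mat_def)
qed

lemma uminus_matrix_vector_mult: "(- A) *v x = - ((A::real^'n^'n) *v x)"
  by (simp add: vec_eq_iff matrix_vector_mult_def sum_negf)

lemma psd_diagonal_nonneg: "psd A \<Longrightarrow> 0 \<le> (A::real^'n^'n) $ j $ j"
  unfolding psd_def diagonal_entry_quadratic_form by blast

text \<open>Minimise the quadratic form along the line \<open>z + t A z\<close>.\<close>
lemma psd_quadratic_form_eq_0_imp:
  fixes A :: "real^'n^'n"
  assumes "psd A" "transpose A = A" "z \<bullet> (A *v z) = 0"
  shows "A *v z = 0"
proof -
  define y where "y = A *v z"
  define a where "a = y \<bullet> y"
  define b where "b = y \<bullet> (A *v y)"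
  have "b \<ge> 0" using assms(1) unfolding psd_def b_def by auto
  have "0 \<le> (z + t *\<^sub>R y) \<bullet> (A *v (z + t *\<^sub>R y))" for t
    using assms(1) unfolding psd_def by auto
  then have quad: "0 \<le> 2 * t * a + t\<^sup>2 * b" for t
    using quadratic_form_add_scaleR[OF assms(2)] assms(3) by (simp add: a_def b_def y_def)
  have "0 \<le> 2 * (- a / (b + 1)) * a + (- a / (b + 1))\<^sup>2 * b" by (rule quad)
  also have "\<dots> = - a\<^sup>2 * (b + 2) / (b + 1)\<^sup>2"
    using \<open>b \<ge> 0\<close> by (simp add: divide_simps power2_eq_square) (simp add: algebra_simps)
  finally have "a\<^sup>2 * (b + 2) \<le> 0"
    using \<open>b \<ge> 0\<close> by (simp add: divide_le_0_iff)
  then have "a = 0" using \<open>b \<ge> 0\<close> by (simp add: mult_le_0_iff)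
  then show ?thesis unfolding a_def y_def by simp
qed

lemma psd_diagonal_eq_0_imp:
  fixes A :: "real^'n^'n"
  assumes "psd A" "transpose A = A" "A $ i $ i = 0"
  shows "A $ j $ i = 0" "A $ i $ j = 0"
proof -
  have "A *v axis i 1 = 0"
    using psd_quadratic_form_eq_0_imp[OF assms(1,2)] assms(3) diagonal_entry_quadratic_form by metis
  then show "A $ j $ i = 0" by (metis matrix_axis_entry zero_index)
  then show "A $ i $ j = 0" using symmetric_matrix_entry[OF assms(2)] by simp
qed

lemma psd_entry_square_le:
  fixes A :: "real^'n^'n"
  assumes "psd A" "transpose A = A" "A $ i $ i > 0"
  shows "(A $ j $ i)\<^sup>2 \<le> A $ i $ i * A $ j $ j"
proof -
  define t where "t = - A $ j $ i / A $ i $ i"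
  have "0 \<le> (axis j 1 + t *\<^sub>R axis i 1) \<bullet> (A *v (axis j 1 + t *\<^sub>R axis i 1))"
    using assms(1) unfolding psd_def by blast
  also have "\<dots> = A $ j $ j + 2 * t * A $ j $ i + t\<^sup>2 * A $ i $ i"
    unfolding quadratic_form_add_scaleR[OF assms(2)]
    by (simp add: inner_axis' matrix_axis_entry symmetric_matrix_entry[OF assms(2), of i j])
  also have "\<dots> = A $ j $ j - (A $ j $ i)\<^sup>2 / A $ i $ i"
    using assms(3) unfolding t_def by (simp add: field_simps power2_eq_square)
  finally show ?thesis using assms(3) by (simp add: field_simps)
qed

section \<open>Extreme eigenvalues of symmetric matrices\<close>

lemma mat_eigenvalues_iff: "c \<in> mat_eigenvalues A \<longleftrightarrow> (\<exists>u. u \<noteq> 0 \<and> A *v u = c *\<^sub>R u)"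
  by (simp add: mat_eigenvalues_def scalar_mult_eq_scaleR)

lemma eigenvector_in_mat_eigenvalues: "u \<noteq> 0 \<Longrightarrow> A *v u = c *\<^sub>R u \<Longrightarrow> c \<in> mat_eigenvalues A"
  unfolding mat_eigenvalues_iff by blast

lemma symmetric_Rayleigh_min_eigenvector:
  fixes A :: "real^'n^'n"
  assumes sym: "transpose A = A"
  obtains u \<mu> where "u \<noteq> 0" "A *v u = \<mu> *\<^sub>R u" "\<And>x. \<mu> * (x \<bullet> x) \<le> x \<bullet> (A *v x)"
proof -
  define f where "f x = x \<bullet> (A *v x)" for x
  have "continuous_on (sphere 0 1) f" unfolding f_def
    by (intro continuous_intros linear_continuous_on matrix_vector_mul_bounded_linear)
  moreover have "sphere (0::real^'n) 1 \<noteq> {}"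
    using norm_axis_1[of undefined] by (metis mem_sphere_0 empty_iff)
  ultimately obtain u where u: "norm u = 1" and umin: "\<And>y. norm y = 1 \<Longrightarrow> f u \<le> f y"
    using continuous_attains_inf[OF compact_sphere] by (metis mem_sphere_0)
  define \<mu> where "\<mu> = f u"
  have low: "\<mu> * (x \<bullet> x) \<le> x \<bullet> (A *v x)" for x
  proof (cases "x = 0")
    case False
    have "\<mu> \<le> f ((1 / norm x) *\<^sub>R x)" using False umin unfolding \<mu>_def by simp
    also have "\<dots> = (x \<bullet> (A *v x)) / (norm x)\<^sup>2"
      unfolding f_def by (simp add: matrix_vector_mult_scaleR power2_eq_square)
    finally show ?thesis using False by (simp add: pos_le_divide_eq dot_square_norm)
  qed simp
  define C where "C = A - mat \<mu>"
  have Cx: "C *v x = A *v x - \<mu> *\<^sub>R x" for x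
    unfolding C_def by (simp add: matrix_vector_mult_diff_rdistrib mat_vector_mult_eq_scaleR)
  have "psd C" unfolding psd_def Cx using low by (simp add: inner_diff_right)
  moreover have "transpose C = C" by (simp add: C_def transpose_diff sym)
  moreover have "u \<bullet> (C *v u) = 0"
    using u unfolding Cx by (simp add: inner_diff_right \<mu>_def f_def dot_square_norm)
  ultimately have "C *v u = 0" by (rule psd_quadratic_form_eq_0_imp)
  then have "A *v u = \<mu> *\<^sub>R u" unfolding Cx by simp
  moreover have "u \<noteq> 0" using u by auto
  ultimately show ?thesis using low that by blast
qed

text \<open>Eigenvectors of a symmetric matrix for distinct eigenvalues are orthogonal, hence
  linearly independent, so there are at most \<open>CARD('n)\<close> eigenvalues.\<close>
lemma finite_mat_eigenvalues_symmetric: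
  fixes A :: "real^'n^'n"
  assumes sym: "transpose A = A"
  shows "finite (mat_eigenvalues A)"
proof -
  define E where "E = mat_eigenvalues A"
  define v where "v c = (SOME w. w \<noteq> 0 \<and> A *v w = c *\<^sub>R w)" for c
  have v: "v c \<noteq> 0 \<and> A *v v c = c *\<^sub>R v c" if "c \<in> E" for c
  proof -
    from that obtain w where "w \<noteq> 0 \<and> A *v w = c *\<^sub>R w"
      unfolding E_def mat_eigenvalues_iff by blast
    then show ?thesis unfolding v_def by (rule someI)
  qed
  have "v c \<bullet> v c' = 0" if "c \<in> E" "c' \<in> E" "c \<noteq> c'" for c c'
  proof -
    have "c * (v c \<bullet> v c') = c' * (v c \<bullet> v c')"
      using inner_symmetric_matrix_commute[OF sym, of "v c'" "v c"] v[OF that(1)] v[OF that(2)]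
      by (simp add: inner_commute)
    then show ?thesis using that(3) by simp
  qed
  then have "pairwise orthogonal (v ` E)"
    unfolding pairwise_def orthogonal_def by (metis imageE)
  moreover have "0 \<notin> v ` E" using v by auto
  ultimately have "finite (v ` E)"
    using pairwise_orthogonal_independent independent_bound by blast
  moreover have "inj_on v E"
  proof
    fix c c' assume "c \<in> E" "c' \<in> E" "v c = v c'"
    then have "(c - c') *\<^sub>R v c = 0" using v by (metis scaleR_left_diff_distrib diff_self)
    then show "c = c'" using v \<open>c \<in> E\<close> by simp
  qed
  ultimately show ?thesis unfolding E_def[symmetric] using finite_imageD by blast
qed

lemma lambda_min_Rayleigh:
  fixes A :: "real^'n^'n"
  assumes sym: "transpose A = A"
  shows "lambda_min A \<in> mat_eigenvalues A" "lambda_min A * (x \<bullet> x) \<le> x \<bullet> (A *v x)"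
proof -
  obtain u \<mu> where u: "u \<noteq> 0" "A *v u = \<mu> *\<^sub>R u" and low: "\<And>x. \<mu> * (x \<bullet> x) \<le> x \<bullet> (A *v x)"
    using symmetric_Rayleigh_min_eigenvector[OF sym] by blast
  have "\<mu> \<le> c" if "c \<in> mat_eigenvalues A" for c
  proof -
    from that obtain w where w: "w \<noteq> 0" "A *v w = c *\<^sub>R w"
      unfolding mat_eigenvalues_iff by blast
    have "\<mu> * (w \<bullet> w) \<le> w \<bullet> (A *v w)" by (rule low)
    also have "\<dots> = c * (w \<bullet> w)" using w(2) by simp
    finally have "\<mu> * (w \<bullet> w) \<le> c * (w \<bullet> w)" .
    then show ?thesis using w(1) by simp
  qed
  then have "lambda_min A = \<mu>"
    unfolding lambda_min_def using finite_mat_eigenvalues_symmetric[OF sym]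
      eigenvector_in_mat_eigenvalues[OF u] by (intro Min_eqI) auto
  then show "lambda_min A \<in> mat_eigenvalues A" "lambda_min A * (x \<bullet> x) \<le> x \<bullet> (A *v x)"
    using eigenvector_in_mat_eigenvalues[OF u] low by auto
qed

lemma lambda_max_Rayleigh:
  fixes A :: "real^'n^'n"
  assumes sym: "transpose A = A"
  shows "x \<bullet> (A *v x) \<le> lambda_max A * (x \<bullet> x)"
proof -
  have "transpose (- A) = - A" using sym by (simp add: transpose_def vec_eq_iff)
  then obtain u \<mu> where u: "u \<noteq> 0" "(- A) *v u = \<mu> *\<^sub>R u"
    and low: "\<And>x. \<mu> * (x \<bullet> x) \<le> x \<bullet> ((- A) *v x)"
    using symmetric_Rayleigh_min_eigenvector by blast
  have "A *v u = (- \<mu>) *\<^sub>R u" using u(2) unfolding uminus_matrix_vector_mult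
    by (metis minus_equation_iff scaleR_minus_left)
  then have "- \<mu> \<le> lambda_max A"
    unfolding lambda_max_def using finite_mat_eigenvalues_symmetric[OF sym]
      eigenvector_in_mat_eigenvalues[OF u(1)] by simp
  then have "- \<mu> * (x \<bullet> x) \<le> lambda_max A * (x \<bullet> x)"
    by (rule mult_right_mono) simp
  then show ?thesis using low[of x] unfolding uminus_matrix_vector_mult by simp
qed

lemma lambda_min_le_lambda_max:
  fixes A :: "real^'n^'n"
  assumes "transpose A = A"
  shows "lambda_min A \<le> lambda_max A"
  unfolding lambda_max_def
  using lambda_min_Rayleigh(1)[OF assms] finite_mat_eigenvalues_symmetric[OF assms] by simp

lemma symmetric_diagonal_le_lambda_max:
  fixes A :: "real^'n^'n"
  assumes "transpose A = A"
  shows "A $ j $ j \<le> lambda_max A"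
proof -
  have "A $ j $ j = axis j 1 \<bullet> (A *v axis j 1)" by (rule diagonal_entry_quadratic_form)
  also have "\<dots> \<le> lambda_max A * (axis j 1 \<bullet> (axis j 1 :: real^'n))"
    by (rule lambda_max_Rayleigh[OF assms])
  finally show ?thesis by simp
qed

lemma sym_pos_def_lambda_min_pos:
  assumes "sym_pos_def_mat A"
  shows "lambda_min A > 0"
proof -
  have sym: "transpose A = A" and pd: "\<And>x. x \<noteq> 0 \<Longrightarrow> x \<bullet> (A *v x) > 0"
    using assms unfolding sym_pos_def_mat_def by auto
  obtain u where "u \<noteq> 0" "A *v u = lambda_min A *\<^sub>R u"
    using lambda_min_Rayleigh(1)[OF sym] unfolding mat_eigenvalues_iff by blast
  then show ?thesis using pd[of u] inner_ge_zero[of u] by (simp add: zero_less_mult_iff)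
qed

lemma sym_pos_def_cond_number_ge_1:
  assumes "sym_pos_def_mat A"
  shows "cond_number A \<ge> 1"
  using lambda_min_le_lambda_max[of A] sym_pos_def_lambda_min_pos[OF assms] assms
  by (simp add: cond_number_def sym_pos_def_mat_def)

section \<open>Rank-one and diagonal matrices\<close>

lemma outer_component: "outer x $ i $ j = x $ i * x $ j"
  by (simp add: outer_def)

lemma transpose_outer: "transpose (outer x) = outer x"
  by (simp add: vec_eq_iff transpose_def outer_def mult.commute)

lemma outer_scaleR: "outer (c *\<^sub>R x) = c\<^sup>2 *\<^sub>R outer x"
  by (simp add: vec_eq_iff outer_def power2_eq_square mult_ac)

lemma outer_uminus: "outer (- x) = outer x"
  by (simp add: outer_def)

lemma quadratic_form_outer: "z \<bullet> (outer x *v z) = (x \<bullet> z)\<^sup>2"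
proof -
  have "outer x *v z = (x \<bullet> z) *\<^sub>R x"
    by (simp add: vec_eq_iff matrix_vector_mult_def outer_def inner_vec_def sum_distrib_left
        sum_distrib_right mult_ac)
  then show ?thesis by (simp add: power2_eq_square inner_commute)
qed

definition diag_mat :: "real^'n \<Rightarrow> real^'n^'n" where
  "diag_mat v = (\<chi> i j. if i = j then v $ i else 0)"

lemma diag_mat_add: "diag_mat (v + w) = diag_mat v + diag_mat w"
  by (simp add: diag_mat_def vec_eq_iff)

lemma diag_mat_diff: "diag_mat (v - w) = diag_mat v - diag_mat w"
  by (simp add: diag_mat_def vec_eq_iff)

lemma diag_mat_scaleR: "diag_mat (c *\<^sub>R v) = c *\<^sub>R diag_mat v"
  by (simp add: diag_mat_def vec_eq_iff)

lemma diag_mat_eq_sum_outer_axis: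
  "diag_mat c = (\<Sum>J\<in>range (\<lambda>i. axis i 1). (c \<bullet> J) *\<^sub>R outer (J :: real^'n))"
proof -
  have "inj (\<lambda>i::'n. axis i (1::real))" by (simp add: inj_on_def axis_eq_axis)
  then have "(\<Sum>J\<in>range (\<lambda>i. axis i 1). (c \<bullet> J) *\<^sub>R outer (J :: real^'n)) =
      (\<Sum>i\<in>UNIV. c $ i *\<^sub>R outer (axis i 1))"
    by (simp add: sum.reindex inner_axis)
  also have "\<dots> = diag_mat c"
  proof -
    have "(\<Sum>i\<in>UNIV. c $ i * (axis i 1 $ a * axis i 1 $ b)) = (if a = b then c $ a else (0::real))"
      for a b :: 'n
    proof -
      have "(\<Sum>i\<in>UNIV. c $ i * (axis i 1 $ a * axis i 1 $ b)) =
          (\<Sum>i\<in>UNIV. if i = a then (if a = b then c $ a else 0) else (0::real))"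
        by (rule sum.cong) (auto simp: axis_def)
      then show ?thesis by simp
    qed
    then show ?thesis by (simp add: vec_eq_iff diag_mat_def outer_def sum_component)
  qed
  finally show ?thesis ..
qed

lemma int_vec_axis: "int_vec (axis i 1)"
  by (simp add: int_vec_def axis_def)

lemma int_vec_uminus: "int_vec J \<Longrightarrow> int_vec (- J)"
  by (simp add: int_vec_def)

lemma sum_scaleR_restrict:
  fixes \<phi> :: "'a \<Rightarrow> 'b::real_vector"
  assumes "finite K" "H \<subseteq> K"
  shows "(\<Sum>J\<in>K. (if J \<in> H then c J else 0) *\<^sub>R \<phi> J) = (\<Sum>J\<in>H. c J *\<^sub>R \<phi> J)"
proof -
  have "(\<Sum>J\<in>K. (if J \<in> H then c J else 0) *\<^sub>R \<phi> J) = (\<Sum>J\<in>K. if J \<in> H then c J *\<^sub>R \<phi> J else 0)"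
    by (intro sum.cong) auto
  also have "\<dots> = (\<Sum>J\<in>H. c J *\<^sub>R \<phi> J)"
    using assms by (simp add: sum.inter_restrict[symmetric] Int_absorb1)
  finally show ?thesis .
qed

lemma sum_scaleR_union_weights:
  fixes \<phi> :: "'a \<Rightarrow> 'b::real_vector"
  assumes "finite F" "finite G"
  shows "(\<Sum>J\<in>F \<union> G. ((if J \<in> F then a J else 0) + (if J \<in> G then b J else 0)) *\<^sub>R \<phi> J) =
    (\<Sum>J\<in>F. a J *\<^sub>R \<phi> J) + (\<Sum>J\<in>G. b J *\<^sub>R \<phi> J)"
  using assms unfolding scaleR_add_left sum.distrib by (simp add: sum_scaleR_restrict)

lemma regroup_nonneg_weights:
  fixes \<phi> :: "'b \<Rightarrow> 'c::real_vector" and J :: "'i \<Rightarrow> 'b" and q :: "'i \<Rightarrow> real"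
  assumes "finite I" "\<And>i. i \<in> I \<Longrightarrow> q i \<ge> 0"
  obtains G g where "finite G" "G \<subseteq> J ` I" "\<forall>x\<in>G. g x > 0"
    "(\<Sum>i\<in>I. q i *\<^sub>R \<phi> (J i)) = (\<Sum>x\<in>G. g x *\<^sub>R \<phi> x)"
proof -
  define I' where "I' = {i\<in>I. q i > 0}"
  define g where "g x = (\<Sum>i\<in>{i\<in>I'. J i = x}. q i)" for x
  have "finite I'" using assms(1) by (simp add: I'_def)
  have "(\<Sum>i\<in>I. q i *\<^sub>R \<phi> (J i)) = (\<Sum>i\<in>I'. q i *\<^sub>R \<phi> (J i))"
    using assms unfolding I'_def by (intro sum.mono_neutral_right) (auto simp: order_le_less)
  also have "\<dots> = (\<Sum>x\<in>J ` I'. \<Sum>i\<in>{i\<in>I'. J i = x}. q i *\<^sub>R \<phi> (J i))"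
    using \<open>finite I'\<close> by (rule sum.image_gen)
  also have "\<dots> = (\<Sum>x\<in>J ` I'. g x *\<^sub>R \<phi> x)"
    unfolding g_def scaleR_sum_left by (intro sum.cong refl) auto
  finally have sum_eq: "(\<Sum>i\<in>I. q i *\<^sub>R \<phi> (J i)) = (\<Sum>x\<in>J ` I'. g x *\<^sub>R \<phi> x)" .
  have pos: "\<forall>x\<in>J ` I'. g x > 0"
  proof
    fix x assume "x \<in> J ` I'"
    then obtain i where "i \<in> I'" "J i = x" by blast
    then show "g x > 0"
      using assms(1) unfolding g_def by (intro sum_pos2[of _ i]) (auto simp: I'_def)
  qed
  have "J ` I' \<subseteq> J ` I" by (auto simp: I'_def)
  with \<open>finite I'\<close> pos sum_eq show ?thesis by (intro that) simp_all
qed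

lemma symmetrize_outer_sum:
  fixes F :: "(real^'n) set"
  assumes "finite F" "\<forall>J\<in>F. h J > 0"
  defines "h0 \<equiv> \<lambda>J. if J \<in> F then h J else 0"
  defines "g \<equiv> \<lambda>J. (h0 J + h0 (- J)) / 2"
  shows "(\<Sum>J\<in>F \<union> uminus ` F. g J *\<^sub>R outer J) = (\<Sum>J\<in>F. h J *\<^sub>R outer J)"
    and "\<forall>J\<in>F \<union> uminus ` F. g J > 0" and "\<forall>J. g (- J) = g J" and "\<forall>J\<in>F. g J \<ge> h J / 2"
proof -
  let ?K = "F \<union> uminus ` F"
  have "finite ?K" using assms(1) by simp
  have h0_nonneg: "h0 J \<ge> 0" for J using assms(2) by (simp add: h0_def less_imp_le)
  have sum_h0: "(\<Sum>J\<in>?K. h0 J *\<^sub>R outer J) = (\<Sum>J\<in>F. h J *\<^sub>R outer J)"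
    unfolding h0_def using \<open>finite ?K\<close> by (rule sum_scaleR_restrict) auto
  have "(\<Sum>J\<in>?K. h0 (- J) *\<^sub>R outer J) = (\<Sum>J\<in>?K. h0 J *\<^sub>R outer J)"
    by (rule sum.reindex_bij_witness[of _ uminus uminus]) (auto simp: outer_uminus image_iff)
  moreover have "(\<Sum>J\<in>?K. g J *\<^sub>R outer J) =
      (1 / 2) *\<^sub>R ((\<Sum>J\<in>?K. h0 J *\<^sub>R outer J) + (\<Sum>J\<in>?K. h0 (- J) *\<^sub>R outer J))"
    unfolding g_def scaleR_add_right scaleR_sum_right sum.distrib[symmetric]
    by (intro sum.cong refl) (simp add: add_divide_distrib scaleR_add_left)
  ultimately show "(\<Sum>J\<in>?K. g J *\<^sub>R outer J) = (\<Sum>J\<in>F. h J *\<^sub>R outer J)"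
    unfolding sum_h0 by (simp flip: scaleR_2)
  show "\<forall>J\<in>?K. g J > 0"
    using assms(2) h0_nonneg unfolding g_def by (force simp: h0_def add_pos_nonneg add_nonneg_pos)
  show "\<forall>J. g (- J) = g J" unfolding g_def by (simp add: add.commute)
  show "\<forall>J\<in>F. g J \<ge> h J / 2" using h0_nonneg unfolding g_def by (simp add: h0_def)
qed

section \<open>Independent randomised rounding\<close>

lemma sum_Pow_prod_if:
  fixes f g :: "'a \<Rightarrow> 'c::comm_semiring_1"
  assumes "finite A"
  shows "(\<Sum>U\<in>Pow A. \<Prod>j\<in>A. if j \<in> U then f j else g j) = (\<Prod>j\<in>A. f j + g j)"
proof -
  have "(\<Sum>U\<in>Pow A. \<Prod>j\<in>A. if j \<in> U then f j else g j) =
      (\<Sum>U\<in>Pow A. (\<Prod>j\<in>U. f j) * (\<Prod>j\<in>A - U. g j))"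
    using assms by (intro sum.cong refl) (simp add: prod.If_cases Int_absorb1 Diff_eq)
  also have "\<dots> = (\<Prod>j\<in>A. f j + g j)" by (rule prod_add[OF assms, symmetric])
  finally show ?thesis .
qed

text \<open>The probability that exactly the coordinates in \<open>U\<close> are rounded up, when coordinate \<open>j\<close>
  is rounded up independently with probability \<open>p $ j\<close>.\<close>
definition rounding_weight :: "real^'n \<Rightarrow> 'n set \<Rightarrow> real" where
  "rounding_weight p U = (\<Prod>j\<in>UNIV. if j \<in> U then p $ j else 1 - p $ j)"

definition rounding_vec :: "real^'n \<Rightarrow> 'n set \<Rightarrow> real^'n" where
  "rounding_vec y U = (\<chi> j. of_int \<lfloor>y $ j\<rfloor> + (if j \<in> U then 1 else 0))"

lemma sum_rounding_weight_superset:
  fixes p :: "real^'n"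
  shows "(\<Sum>U\<in>Pow UNIV. if K \<subseteq> U then rounding_weight p U else 0) = (\<Prod>j\<in>K. p $ j)"
proof -
  have "(if K \<subseteq> U then rounding_weight p U else 0) =
      (\<Prod>j\<in>UNIV. if j \<in> U then p $ j else if j \<in> K then 0 else 1 - p $ j)" for U
    unfolding rounding_weight_def by (auto intro!: prod.cong simp: prod_zero_iff)
  then have "(\<Sum>U\<in>Pow UNIV. if K \<subseteq> U then rounding_weight p U else 0) =
      (\<Prod>j\<in>UNIV. p $ j + (if j \<in> K then 0 else 1 - p $ j))"
    using sum_Pow_prod_if[of "UNIV :: 'n set" "\<lambda>j. p $ j" "\<lambda>j. if j \<in> K then 0 else 1 - p $ j"]
    by simp
  also have "\<dots> = (\<Prod>j\<in>UNIV. if j \<in> K then p $ j else 1)"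
    by (rule prod.cong) auto
  finally show ?thesis by (simp add: prod.If_cases)
qed

lemma rounding_second_moment:
  fixes y :: "real^'n"
  defines "p \<equiv> \<chi> j. frac (y $ j)"
  shows "(\<Sum>U\<in>Pow UNIV. rounding_weight p U *\<^sub>R outer (rounding_vec y U)) =
    outer y + diag_mat (\<chi> j. p $ j * (1 - p $ j))"
proof -
  define w where "w = rounding_weight p"
  define M where "M K = (\<Sum>U\<in>Pow UNIV. if K \<subseteq> U then w U else 0)" for K
  have M: "M K = (\<Prod>j\<in>K. p $ j)" for K
    unfolding M_def w_def by (rule sum_rounding_weight_superset)
  have "(\<Sum>U\<in>Pow UNIV. w U *\<^sub>R outer (rounding_vec y U)) $ a $ b =
      y $ a * y $ b + (if a = b then p $ a * (1 - p $ a) else 0)" for a b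
  proof -
    define fa fb :: real where "fa = of_int \<lfloor>y $ a\<rfloor>" and "fb = of_int \<lfloor>y $ b\<rfloor>"
    have expand: "w U * (rounding_vec y U $ a * rounding_vec y U $ b) =
        fa * fb * w U + fa * (if {b} \<subseteq> U then w U else 0) + fb * (if {a} \<subseteq> U then w U else 0)
        + (if {a, b} \<subseteq> U then w U else 0)" for U
      by (simp add: rounding_vec_def fa_def fb_def algebra_simps)
    have "(\<Sum>U\<in>Pow UNIV. w U *\<^sub>R outer (rounding_vec y U)) $ a $ b =
        (\<Sum>U\<in>Pow UNIV. w U * (rounding_vec y U $ a * rounding_vec y U $ b))"
      by (simp add: outer_def sum_component)
    also have "\<dots> = fa * fb * M {} + fa * M {b} + fb * M {a} + M {a, b}"
      unfolding expand M_def by (simp add: sum.distrib sum_distrib_left)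
    also have "\<dots> = y $ a * y $ b + (if a = b then p $ a * (1 - p $ a) else 0)"
      by (cases "a = b") (simp_all add: M p_def fa_def fb_def frac_def algebra_simps)
    finally show ?thesis .
  qed
  then show ?thesis unfolding w_def by (simp add: vec_eq_iff outer_def diag_mat_def)
qed

lemma rounding_vec_int_vec: "int_vec (rounding_vec y U)"
  by (simp add: int_vec_def rounding_vec_def)

lemma rounding_vec_bound: "\<bar>rounding_vec y U $ j\<bar> \<le> \<bar>y $ j\<bar> + 1"
proof -
  have "of_int \<lfloor>y $ j\<rfloor> \<le> y $ j" "y $ j < of_int \<lfloor>y $ j\<rfloor> + 1" by linarith+
  moreover have "0 \<le> (if j \<in> U then 1 else 0 :: real)" "(if j \<in> U then 1 else 0 :: real) \<le> 1" by auto
  ultimately show ?thesis unfolding rounding_vec_def vec_lambda_beta by arith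
qed

lemma mult_one_minus_le_quarter: "(t::real) * (1 - t) \<le> 1 / 4"
proof -
  have "t * (1 - t) = 1 / 4 - (t - 1 / 2)\<^sup>2" by (simp add: power2_eq_square field_simps)
  then show ?thesis by simp
qed

lemma independent_rounding:
  fixes y :: "real^'n"
  obtains G q v where "finite G" "\<forall>J\<in>G. q J > 0" "\<forall>J\<in>G. int_vec J \<and> (\<forall>j. \<bar>J $ j\<bar> \<le> \<bar>y $ j\<bar> + 1)"
    "\<forall>j. 0 \<le> v $ j \<and> v $ j \<le> 1 / 4" "(\<Sum>J\<in>G. q J *\<^sub>R outer J) = outer y + diag_mat v"
proof -
  define p where "p = (\<chi> j. frac (y $ j))"
  define v where "v = (\<chi> j. p $ j * (1 - p $ j))"
  have nonneg: "rounding_weight p U \<ge> 0" for U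
    unfolding rounding_weight_def p_def by (intro prod_nonneg) (auto simp: frac_lt_1 less_imp_le)
  obtain G q where G: "finite G" "G \<subseteq> rounding_vec y ` Pow UNIV" "\<forall>J\<in>G. q J > 0"
    and sum_G: "(\<Sum>U\<in>Pow UNIV. rounding_weight p U *\<^sub>R outer (rounding_vec y U)) =
        (\<Sum>J\<in>G. q J *\<^sub>R outer J)"
    by (rule regroup_nonneg_weights[where I = "Pow UNIV" and q = "rounding_weight p" and \<phi> = outer
        and J = "rounding_vec y"]) (simp_all add: nonneg)
  have "\<forall>J\<in>G. int_vec J \<and> (\<forall>j. \<bar>J $ j\<bar> \<le> \<bar>y $ j\<bar> + 1)"
    using G(2) rounding_vec_int_vec rounding_vec_bound by blast
  moreover have "0 \<le> v $ j \<and> v $ j \<le> 1 / 4" for j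
  proof -
    have "0 \<le> p $ j" "p $ j < 1" by (simp_all add: p_def frac_lt_1)
    then show ?thesis unfolding v_def using mult_one_minus_le_quarter[of "p $ j"] by simp
  qed
  moreover have "(\<Sum>J\<in>G. q J *\<^sub>R outer J) = outer y + diag_mat v"
    using sum_G rounding_second_moment[of y] by (simp add: p_def v_def)
  ultimately show ?thesis using G(1,3) by (intro that) simp_all
qed

lemma scaled_rounding:
  fixes x :: "real^'n"
  assumes "s > 0"
  obtains G q v where "finite G" "\<forall>J\<in>G. q J > 0"
    "\<forall>J\<in>G. int_vec J \<and> (\<forall>j. \<bar>J $ j\<bar> \<le> s * \<bar>x $ j\<bar> + 1)"
    "\<forall>j. 0 \<le> v $ j \<and> v $ j \<le> 1 / (4 * s\<^sup>2)" "outer x = (\<Sum>J\<in>G. q J *\<^sub>R outer J) - diag_mat v"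
proof -
  obtain G q v where G: "finite G" "\<forall>J\<in>G. q J > 0"
    "\<forall>J\<in>G. int_vec J \<and> (\<forall>j. \<bar>J $ j\<bar> \<le> \<bar>(s *\<^sub>R x) $ j\<bar> + 1)"
    and v: "\<forall>j. 0 \<le> v $ j \<and> v $ j \<le> 1 / 4"
    and sum: "(\<Sum>J\<in>G. q J *\<^sub>R outer J) = outer (s *\<^sub>R x) + diag_mat v"
    by (rule independent_rounding)
  have "(\<Sum>J\<in>G. (q J / s\<^sup>2) *\<^sub>R outer J) = (1 / s\<^sup>2) *\<^sub>R (\<Sum>J\<in>G. q J *\<^sub>R outer J)"
    by (simp add: scaleR_sum_right)
  also have "\<dots> = outer x + diag_mat ((1 / s\<^sup>2) *\<^sub>R v)"
    using assms by (simp add: sum outer_scaleR scaleR_add_right diag_mat_scaleR)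
  finally have "outer x = (\<Sum>J\<in>G. (q J / s\<^sup>2) *\<^sub>R outer J) - diag_mat ((1 / s\<^sup>2) *\<^sub>R v)"
    by simp
  moreover have "0 \<le> ((1 / s\<^sup>2) *\<^sub>R v) $ j \<and> ((1 / s\<^sup>2) *\<^sub>R v) $ j \<le> 1 / (4 * s\<^sup>2)" for j
    using v divide_right_mono[of "v $ j" "1 / 4" "s\<^sup>2"] by simp
  ultimately show ?thesis
    using G assms by (intro that[of G "\<lambda>J. q J / s\<^sup>2"]) (simp_all add: abs_mult)
qed

section \<open>Elimination with rounding\<close>

definition supported_on :: "'n set \<Rightarrow> real^'n^'n \<Rightarrow> bool" where
  "supported_on S B \<longleftrightarrow> (\<forall>i j. B $ i $ j \<noteq> 0 \<longrightarrow> i \<in> S \<and> j \<in> S)"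

lemma supported_on_card_le_1:
  assumes "supported_on S B" "card S \<le> 1"
  shows "B = diag_mat (\<chi> j. B $ j $ j)"
  using assms by (auto simp: supported_on_def vec_eq_iff diag_mat_def card_le_Suc0_iff_eq)

lemma psd_supported_on_Diff:
  assumes "psd B" "transpose B = B" "supported_on S B" "B $ i $ i = 0"
  shows "supported_on (S - {i}) B"
  using assms(3) psd_diagonal_eq_0_imp[OF assms(1,2,4)] unfolding supported_on_def by blast

lemma schur_complement_entries:
  fixes B :: "real^'n^'n"
  assumes psd: "psd B" and sym: "transpose B = B" and pos: "B $ i $ i > 0"
  defines "x \<equiv> (1 / sqrt (B $ i $ i)) *\<^sub>R (B *v axis i 1)"
  shows "transpose (B - outer x) = B - outer x"
    "supported_on S B \<Longrightarrow> supported_on (S - {i}) (B - outer x)"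
    "(B - outer x) $ j $ j \<le> B $ j $ j" "\<bar>x $ j\<bar> \<le> sqrt (B $ j $ j)"
proof -
  have x: "x $ j = B $ j $ i / sqrt (B $ i $ i)" for j
    by (simp add: x_def matrix_axis_entry)
  have outer_x: "outer x $ a $ b = B $ a $ i * B $ b $ i / B $ i $ i" for a b
    using pos by (simp add: outer_component x)
  show "transpose (B - outer x) = B - outer x" by (simp add: transpose_diff transpose_outer sym)
  show "(B - outer x) $ j $ j \<le> B $ j $ j" by (simp add: outer_component)
  have zero: "(B - outer x) $ i $ j = 0" "(B - outer x) $ j $ i = 0" for j
    using pos by (simp_all add: outer_x symmetric_matrix_entry[OF sym, of i j])
  show "supported_on (S - {i}) (B - outer x)" if "supported_on S B"
    unfolding supported_on_def
  proof (intro allI impI)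
    fix a b assume nonzero: "(B - outer x) $ a $ b \<noteq> 0"
    then have "a \<noteq> i" "b \<noteq> i" using zero by auto
    moreover have "B $ a $ b \<noteq> 0 \<or> B $ a $ i \<noteq> 0 \<and> B $ b $ i \<noteq> 0"
      using nonzero by (auto simp: outer_x)
    ultimately show "a \<in> S - {i} \<and> b \<in> S - {i}" using that unfolding supported_on_def by blast
  qed
  have "\<bar>B $ j $ i\<bar> \<le> sqrt (B $ i $ i) * sqrt (B $ j $ j)"
    using psd_entry_square_le[OF psd sym pos, of j] by (metis real_sqrt_abs real_sqrt_le_mono real_sqrt_mult)
  then show "\<bar>x $ j\<bar> \<le> sqrt (B $ j $ j)"
    using pos by (simp add: x abs_div pos_divide_le_eq mult.commute)
qed

lemma psd_schur_complement:
  fixes B :: "real^'n^'n"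
  assumes psd: "psd B" and sym: "transpose B = B" and pos: "B $ i $ i > 0"
  defines "x \<equiv> (1 / sqrt (B $ i $ i)) *\<^sub>R (B *v axis i 1)"
  shows "psd (B - outer x)"
  unfolding psd_def
proof
  fix z
  define a where "a = (B *v z) $ i"
  define t where "t = - a / B $ i $ i"
  have "0 \<le> (z + t *\<^sub>R axis i 1) \<bullet> (B *v (z + t *\<^sub>R axis i 1))"
    using psd unfolding psd_def by blast
  also have "\<dots> = z \<bullet> (B *v z) - a\<^sup>2 / B $ i $ i"
    using pos unfolding quadratic_form_add_scaleR[OF sym] diagonal_entry_quadratic_form[symmetric]
    by (simp add: inner_axis' a_def t_def field_simps power2_eq_square)
  also have "a\<^sup>2 / B $ i $ i = z \<bullet> (outer x *v z)"
  proof -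
    have "x \<bullet> z = a / sqrt (B $ i $ i)"
      using inner_symmetric_matrix_commute[OF sym, of z "axis i 1"]
      by (simp add: x_def a_def inner_axis' inner_commute)
    then show ?thesis using pos by (simp add: quadratic_form_outer power_divide)
  qed
  finally show "0 \<le> z \<bullet> ((B - outer x) *v z)"
    by (simp add: matrix_vector_mult_diff_rdistrib inner_diff_right)
qed

text \<open>\<open>k\<close> is the number of coordinates still to be eliminated; all but the last of them cost a
  rounding step, each lowering the diagonal by at most \<open>1 / (4 s\<^sup>2)\<close>.\<close>
definition int_outer_repr :: "real \<Rightarrow> real \<Rightarrow> nat \<Rightarrow> real^'n^'n \<Rightarrow> bool" where
  "int_outer_repr s D k B \<longleftrightarrow> (\<exists>F h w. finite F \<and>
     (\<forall>J\<in>F. int_vec J \<and> (\<forall>j. \<bar>J $ j\<bar> \<le> 1 + s * sqrt D)) \<and> (\<forall>J\<in>F. h J > 0) \<and>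
     (\<forall>j. w $ j \<ge> - real (k - 1) / (4 * s\<^sup>2)) \<and> (k \<le> 1 \<longrightarrow> F = {}) \<and>
     B = (\<Sum>J\<in>F. h J *\<^sub>R outer J) + diag_mat w)"

lemma int_outer_repr_diag_mat:
  assumes "\<forall>j. w $ j \<ge> 0"
  shows "int_outer_repr s D k (diag_mat w)"
proof -
  have "- real (k - 1) / (4 * s\<^sup>2) \<le> 0" by (simp add: divide_nonpos_nonneg)
  then have "- real (k - 1) / (4 * s\<^sup>2) \<le> w $ j" for j using assms order_trans by blast
  then show ?thesis unfolding int_outer_repr_def
    by (intro exI[of _ "{}"] exI[of _ "\<lambda>_. 0"] exI[of _ w]) simp
qed

lemma int_outer_repr_mono:
  assumes "int_outer_repr s D k' B" "k' \<le> k"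
  shows "int_outer_repr s D k B"
proof -
  obtain F h w where F: "finite F" "\<forall>J\<in>F. int_vec J \<and> (\<forall>j. \<bar>J $ j\<bar> \<le> 1 + s * sqrt D)"
    "\<forall>J\<in>F. h J > 0" "k' \<le> 1 \<longrightarrow> F = {}" "B = (\<Sum>J\<in>F. h J *\<^sub>R outer J) + diag_mat w"
    and w: "\<forall>j. w $ j \<ge> - real (k' - 1) / (4 * s\<^sup>2)"
    using assms(1) unfolding int_outer_repr_def by blast
  have "- real (k - 1) / (4 * s\<^sup>2) \<le> - real (k' - 1) / (4 * s\<^sup>2)"
    using assms(2) by (simp add: divide_right_mono)
  then have "\<forall>j. w $ j \<ge> - real (k - 1) / (4 * s\<^sup>2)" using w order_trans by blast
  moreover have "k \<le> 1 \<longrightarrow> F = {}" using F(4) assms(2) by simp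
  ultimately show ?thesis unfolding int_outer_repr_def using F(1,2,3,5) by blast
qed

lemma int_outer_repr_add_outer:
  assumes repr: "int_outer_repr s D k B" and "k \<ge> 1" "s > 0" and x: "\<forall>j. \<bar>x $ j\<bar> \<le> sqrt D"
  shows "int_outer_repr s D (Suc k) (B + outer x)"
proof -
  obtain F h w where F: "finite F" "\<forall>J\<in>F. int_vec J \<and> (\<forall>j. \<bar>J $ j\<bar> \<le> 1 + s * sqrt D)"
    "\<forall>J\<in>F. h J > 0" and w: "\<forall>j. w $ j \<ge> - real (k - 1) / (4 * s\<^sup>2)"
    and B: "B = (\<Sum>J\<in>F. h J *\<^sub>R outer J) + diag_mat w"
    using repr unfolding int_outer_repr_def by blast
  obtain G q v where G: "finite G" "\<forall>J\<in>G. q J > 0"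
    "\<forall>J\<in>G. int_vec J \<and> (\<forall>j. \<bar>J $ j\<bar> \<le> s * \<bar>x $ j\<bar> + 1)"
    and v: "\<forall>j. 0 \<le> v $ j \<and> v $ j \<le> 1 / (4 * s\<^sup>2)"
    and outer_x: "outer x = (\<Sum>J\<in>G. q J *\<^sub>R outer J) - diag_mat v"
    by (rule scaled_rounding[OF \<open>s > 0\<close>])
  define h' where "h' J = (if J \<in> F then h J else 0) + (if J \<in> G then q J else 0)" for J
  have "B + outer x = (\<Sum>J\<in>F \<union> G. h' J *\<^sub>R outer J) + diag_mat (w - v)"
    unfolding B outer_x h'_def sum_scaleR_union_weights[OF F(1) G(1)] diag_mat_diff by simp
  moreover have "\<forall>J\<in>F \<union> G. h' J > 0"
    using F(3) G(2) unfolding h'_def by (auto simp: add_pos_nonneg add_nonneg_pos)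
  moreover have "\<bar>J $ j\<bar> \<le> 1 + s * sqrt D" if "J \<in> G" for J j
  proof -
    have "\<bar>J $ j\<bar> \<le> s * \<bar>x $ j\<bar> + 1" using G(3) that by blast
    moreover have "s * \<bar>x $ j\<bar> \<le> s * sqrt D" using x \<open>s > 0\<close> by (simp add: mult_left_mono)
    ultimately show ?thesis by linarith
  qed
  then have "\<forall>J\<in>F \<union> G. int_vec J \<and> (\<forall>j. \<bar>J $ j\<bar> \<le> 1 + s * sqrt D)"
    using F(2) G(3) by blast
  moreover have "(w - v) $ j \<ge> - real (Suc k - 1) / (4 * s\<^sup>2)" for j
  proof -
    have "- real (Suc k - 1) / (4 * s\<^sup>2) = - real (k - 1) / (4 * s\<^sup>2) - 1 / (4 * s\<^sup>2)"
      using \<open>k \<ge> 1\<close> by (simp add: of_nat_diff diff_divide_distrib)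
    then show ?thesis unfolding vector_minus_component using w[rule_format, of j] v[rule_format, of j]
      by linarith
  qed
  ultimately show ?thesis
    unfolding int_outer_repr_def using F(1) G(1) \<open>k \<ge> 1\<close>
    by (intro exI[of _ "F \<union> G"] exI[of _ h'] exI[of _ "w - v"]) auto
qed

lemma psd_int_outer_repr:
  fixes B :: "real^'n^'n"
  assumes "s > 0" "psd B" "transpose B = B" "supported_on S B" "\<forall>j. B $ j $ j \<le> D"
  shows "int_outer_repr s D (card S) B"
  using assms(2-)
proof (induction "card S" arbitrary: S B rule: less_induct)
  case less
  note psd = less.prems(1) and sym = less.prems(2) and supp = less.prems(3) and diag = less.prems(4)
  show ?case
  proof (cases "card S \<le> 1")
    case True
    have "B = diag_mat (\<chi> j. B $ j $ j)" using supp True by (rule supported_on_card_le_1)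
    moreover have "\<forall>j. (\<chi> j. B $ j $ j) $ j \<ge> 0" using psd_diagonal_nonneg[OF psd] by simp
    ultimately show ?thesis by (metis int_outer_repr_diag_mat)
  next
    case False
    then obtain i where "i \<in> S" by fastforce
    then have card: "card S = Suc (card (S - {i}))" "card (S - {i}) \<ge> 1"
      using False by (simp_all add: card_Suc_Diff1)
    show ?thesis
    proof (cases "B $ i $ i = 0")
      case True
      then have "int_outer_repr s D (card (S - {i})) B"
        using less.hyps[OF _ psd sym psd_supported_on_Diff[OF psd sym supp] diag] card by simp
      then show ?thesis using card by (simp add: int_outer_repr_mono)
    next
      case False
      then have pos: "B $ i $ i > 0" using psd_diagonal_nonneg[OF psd, of i] by simp
      define x where "x = (1 / sqrt (B $ i $ i)) *\<^sub>R (B *v axis i 1)"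
      note schur = psd_schur_complement[OF psd sym pos, folded x_def]
        schur_complement_entries[OF psd sym pos, folded x_def]
      have "\<forall>j. (B - outer x) $ j $ j \<le> D" using schur(4) diag order_trans by blast
      then have "int_outer_repr s D (card (S - {i})) (B - outer x)"
        using less.hyps[OF _ schur(1,2) schur(3)[OF supp]] card by simp
      moreover have "\<forall>j. \<bar>x $ j\<bar> \<le> sqrt D"
        using schur(5) diag real_sqrt_le_mono order_trans by blast
      ultimately have "int_outer_repr s D (Suc (card (S - {i}))) (B - outer x + outer x)"
        using int_outer_repr_add_outer card(2) \<open>s > 0\<close> by blast
      then show ?thesis using card(1) by simp
    qed
  qed
qed

lemma psd_minus_lambda_min:
  fixes A :: "real^'n^'n"
  assumes sym: "transpose A = A"
  defines "B \<equiv> A - mat (lambda_min A)"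
  shows "psd B" "transpose B = B" "B $ j $ j \<le> lambda_max A - lambda_min A"
proof -
  show "psd B" using lambda_min_Rayleigh(2)[OF sym] unfolding psd_def B_def
    by (simp add: matrix_vector_mult_diff_rdistrib mat_vector_mult_eq_scaleR inner_diff_right)
  show "transpose B = B" by (simp add: B_def transpose_diff sym)
  show "B $ j $ j \<le> lambda_max A - lambda_min A"
    using symmetric_diagonal_le_lambda_max[OF sym] by (simp add: B_def mat_def)
qed

text \<open>Here \<open>e = d - 1\<close>; the \<open>max\<close> only keeps \<open>s\<close> positive for \<open>d = 1\<close>, where nothing is rounded.\<close>
lemma rounding_scale_bounds:
  fixes \<mu> e D L :: real
  assumes "\<mu> > 0" "e \<ge> 0" "0 \<le> D" "D \<le> L"
  defines "s \<equiv> sqrt (max 1 e / (2 * \<mu>))"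
  shows "e / (4 * s\<^sup>2) \<le> \<mu> / 2" and "e \<ge> 1 \<Longrightarrow> s * sqrt D \<le> sqrt (2 * e * (L / \<mu>)) / 2"
proof -
  have s2: "s\<^sup>2 = max 1 e / (2 * \<mu>)" using assms(1) by (simp add: s_def)
  have "e / (4 * s\<^sup>2) = \<mu> / 2 * (e / max 1 e)" using assms(1) by (simp add: s2 field_simps)
  also have "\<dots> \<le> \<mu> / 2"
    using assms(1) by (intro mult_left_le) (auto simp: divide_le_eq_1 less_max_iff_disj)
  finally show "e / (4 * s\<^sup>2) \<le> \<mu> / 2" .
  assume "e \<ge> 1"
  then have "s * sqrt D = sqrt (e / (2 * \<mu>) * D)" by (simp add: s_def max_def flip: real_sqrt_mult)
  also have "\<dots> \<le> sqrt (e / (2 * \<mu>) * L)"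
    using assms by (intro real_sqrt_le_mono mult_left_mono) simp_all
  also have "e / (2 * \<mu>) * L = 2 * e * (L / \<mu>) / 4" by simp
  also have "sqrt (2 * e * (L / \<mu>) / 4) = sqrt (2 * e * (L / \<mu>)) / 2"
    by (simp only: real_sqrt_divide real_sqrt_four)
  finally show "s * sqrt D \<le> sqrt (2 * e * (L / \<mu>)) / 2" .
qed

lemma sym_pos_def_int_outer_decomposition:
  fixes A :: "real^'n^'n"
  assumes "sym_pos_def_mat A"
  obtains F h c where "finite F" "\<forall>J\<in>F. h J > 0" "\<forall>j. c $ j \<ge> lambda_min A / 2"
    "\<forall>J\<in>F. int_vec J \<and> (\<forall>j. \<bar>J $ j\<bar> \<le> 1 + sqrt (2 * (real CARD('n) - 1) * cond_number A) / 2)"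
    "A = (\<Sum>J\<in>F. h J *\<^sub>R outer J) + diag_mat c"
proof -
  define \<mu> where "\<mu> = lambda_min A"
  define e where "e = real CARD('n) - 1"
  define s where "s = sqrt (max 1 e / (2 * \<mu>))"
  define B where "B = A - mat \<mu>"
  have sym: "transpose A = A" using assms by (simp add: sym_pos_def_mat_def)
  note shift = psd_minus_lambda_min[OF sym, folded \<mu>_def B_def]
  have "\<mu> > 0" unfolding \<mu>_def by (rule sym_pos_def_lambda_min_pos[OF assms])
  have "e \<ge> 0" by (simp add: e_def Suc_le_eq)
  have "int_outer_repr s (lambda_max A - \<mu>) CARD('n) B"
    using psd_int_outer_repr[OF _ shift(1,2), of s UNIV] shift(3) \<open>\<mu> > 0\<close> by (simp add: s_def supported_on_def B_def)
  then obtain F h w where F: "finite F" "\<forall>J\<in>F. h J > 0" "CARD('n) \<le> 1 \<longrightarrow> F = {}"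
      "\<forall>J\<in>F. int_vec J \<and> (\<forall>j. \<bar>J $ j\<bar> \<le> 1 + s * sqrt (lambda_max A - \<mu>))"
    and w: "\<forall>j. w $ j \<ge> - e / (4 * s\<^sup>2)" and B_eq: "B = (\<Sum>J\<in>F. h J *\<^sub>R outer J) + diag_mat w"
    unfolding int_outer_repr_def e_def by (auto simp: of_nat_diff)
  have "0 \<le> lambda_max A - \<mu>" "lambda_max A - \<mu> \<le> lambda_max A"
    using lambda_min_le_lambda_max[OF sym, folded \<mu>_def] \<open>\<mu> > 0\<close> by linarith+
  note scale = rounding_scale_bounds[OF \<open>\<mu> > 0\<close> \<open>e \<ge> 0\<close> this, folded s_def]
  have "mat \<mu> = diag_mat (\<chi> j. \<mu>)" by (simp add: mat_def diag_mat_def vec_eq_iff)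
  then have "A = (\<Sum>J\<in>F. h J *\<^sub>R outer J) + diag_mat (w + (\<chi> j. \<mu>))"
    using B_eq unfolding B_def diff_eq_eq diag_mat_add by (simp add: add.assoc)
  moreover have "(w + (\<chi> j. \<mu>)) $ j \<ge> lambda_min A / 2" for j
  proof -
    have "w $ j \<ge> - (e / (4 * s\<^sup>2))" using w by (metis minus_divide_left)
    then show ?thesis using scale(1) by (simp add: \<mu>_def)
  qed
  moreover have "\<bar>J $ j\<bar> \<le> 1 + sqrt (2 * (real CARD('n) - 1) * cond_number A) / 2" if "J \<in> F" for J j
  proof -
    have "e \<ge> 1" using F(3) that by (auto simp: e_def)
    have "\<bar>J $ j\<bar> \<le> 1 + s * sqrt (lambda_max A - \<mu>)" using F(4) that by blast
    moreover have "s * sqrt (lambda_max A - \<mu>) \<le> sqrt (2 * e * (lambda_max A / \<mu>)) / 2"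
      by (rule scale(2)[OF \<open>e \<ge> 1\<close>])
    ultimately show ?thesis unfolding e_def cond_number_def \<mu>_def by linarith
  qed
  ultimately show ?thesis using F(1,2,4) by (intro that[of F h "w + (\<chi> j. \<mu>)"]) simp_all
qed

lemma symmetric_outer_sum_with_axes:
  fixes F :: "(real^'n) set"
  assumes "finite F" "\<forall>J\<in>F. h J > 0" "\<forall>i. c $ i > 0"
  obtains K g where "finite K" "\<forall>J\<in>K. \<exists>J'\<in>F \<union> range (\<lambda>i. axis i 1). J = J' \<or> J = - J'"
    "(\<Sum>J\<in>K. g J *\<^sub>R outer J) = (\<Sum>J\<in>F. h J *\<^sub>R outer J) + diag_mat c"
    "\<forall>J\<in>K. g J > 0" "\<forall>i. axis i 1 \<in> K" "\<forall>J\<in>K. - J \<in> K \<and> g (- J) = g J"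
    "\<forall>i. g (axis i 1) \<ge> c $ i / 2"
proof -
  define E where "E = range (\<lambda>i. axis i 1 :: real^'n)"
  define h' where "h' J = (if J \<in> F then h J else 0) + (if J \<in> E then c \<bullet> J else 0)" for J
  have "finite (F \<union> E)" using assms(1) by (simp add: E_def)
  have sum_h': "(\<Sum>J\<in>F \<union> E. h' J *\<^sub>R outer J) = (\<Sum>J\<in>F. h J *\<^sub>R outer J) + diag_mat c"
    unfolding h'_def diag_mat_eq_sum_outer_axis E_def[symmetric] using assms(1)
    by (simp add: sum_scaleR_union_weights E_def)
  have h'_pos: "\<forall>J\<in>F \<union> E. h' J > 0" and h'_axis: "h' (axis i 1) \<ge> c $ i" for i
    using assms(2,3) by (auto simp: h'_def E_def inner_axis add_pos_nonneg add_nonneg_pos)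
  define K where "K = (F \<union> E) \<union> uminus ` (F \<union> E)"
  define g where "g J = ((if J \<in> F \<union> E then h' J else 0) + (if - J \<in> F \<union> E then h' (- J) else 0)) / 2"
    for J
  have sym: "(\<Sum>J\<in>K. g J *\<^sub>R outer J) = (\<Sum>J\<in>F \<union> E. h' J *\<^sub>R outer J)" "\<forall>J\<in>K. g J > 0"
    "\<forall>J. g (- J) = g J" "\<forall>J\<in>F \<union> E. g J \<ge> h' J / 2"
    using symmetrize_outer_sum[OF \<open>finite (F \<union> E)\<close> h'_pos] unfolding K_def g_def by simp_all
  show ?thesis
  proof (rule that[of K g])
    show "finite K" using \<open>finite (F \<union> E)\<close> by (simp add: K_def)
    show "\<forall>J\<in>K. \<exists>J'\<in>F \<union> range (\<lambda>i. axis i 1). J = J' \<or> J = - J'"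
      unfolding K_def E_def by blast
    show "\<forall>J\<in>K. - J \<in> K \<and> g (- J) = g J"
      using sym(3) unfolding K_def by (metis UnCI UnE image_eqI imageE minus_minus)
    show "\<forall>i. g (axis i 1) \<ge> c $ i / 2"
    proof
      fix i
      have "h' (axis i 1) / 2 \<le> g (axis i 1)" using sym(4) by (simp add: E_def)
      then show "g (axis i 1) \<ge> c $ i / 2" using h'_axis[of i] by linarith
    qed
  qed (use sum_h' sym(1,2) in \<open>simp_all add: K_def E_def\<close>)
qed

theorem lemma3p1:
  fixes \<sigma>2 :: "real^'n^'n"
  assumes "sym_pos_def_mat \<sigma>2"
  shows "\<exists>\<J> :: (real^'n) set. \<exists>g :: real^'n \<Rightarrow> real.
           finite \<J> \<and> (\<forall>J\<in>\<J>. int_vec J) \<and>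
           \<sigma>2 = (\<Sum>J\<in>\<J>. g J *\<^sub>R outer J) \<and>
           (\<forall>J\<in>\<J>. g J > 0) \<and>
           (\<forall>i. axis i 1 \<in> \<J>) \<and>
           (\<forall>J\<in>\<J>. - J \<in> \<J> \<and> g (- J) = g J) \<and>
           (\<forall>J\<in>\<J>. \<forall>i. \<bar>J$i\<bar> \<le> 1 + sqrt (2 * (real CARD('n) - 1) * cond_number \<sigma>2) / 2) \<and>
           (\<forall>i. g (axis i 1) \<ge> lambda_min \<sigma>2 / 4)"
proof -
  define R where "R = sqrt (2 * (real CARD('n) - 1) * cond_number \<sigma>2) / 2"
  obtain F h c where F: "finite F" "\<forall>J\<in>F. h J > 0" and c: "\<forall>j. c $ j \<ge> lambda_min \<sigma>2 / 2"
    and F_int: "\<forall>J\<in>F. int_vec J \<and> (\<forall>j. \<bar>J $ j\<bar> \<le> 1 + R)"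
    and \<sigma>2: "\<sigma>2 = (\<Sum>J\<in>F. h J *\<^sub>R outer J) + diag_mat c"
    unfolding R_def by (rule sym_pos_def_int_outer_decomposition[OF assms])
  have "\<forall>i. c $ i > 0" using c sym_pos_def_lambda_min_pos[OF assms] by (metis half_gt_zero less_le_trans)
  then obtain K g where K: "finite K" "\<forall>J\<in>K. \<exists>J'\<in>F \<union> range (\<lambda>i. axis i 1). J = J' \<or> J = - J'"
    "(\<Sum>J\<in>K. g J *\<^sub>R outer J) = (\<Sum>J\<in>F. h J *\<^sub>R outer J) + diag_mat c"
    "\<forall>J\<in>K. g J > 0" "\<forall>i. axis i 1 \<in> K" "\<forall>J\<in>K. - J \<in> K \<and> g (- J) = g J"
    and g_axis: "\<forall>i. g (axis i 1) \<ge> c $ i / 2"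
    by (rule symmetric_outer_sum_with_axes[OF F])
  have "R \<ge> 0"
    using sym_pos_def_cond_number_ge_1[OF assms] by (simp add: R_def Suc_le_eq)
  then have "\<bar>axis k 1 $ i\<bar> \<le> 1 + R" for k i by (simp add: axis_def)
  then have "int_vec J \<and> (\<forall>i. \<bar>J $ i\<bar> \<le> 1 + R)" if "J \<in> F \<union> range (\<lambda>i. axis i 1)" for J
    using that F_int int_vec_axis by auto
  then have K_int: "int_vec J \<and> (\<forall>i. \<bar>J $ i\<bar> \<le> 1 + R)" if "J \<in> K" for J
    using K(2) that by (metis abs_minus_cancel int_vec_uminus vector_uminus_component)
  have "g (axis i 1) \<ge> lambda_min \<sigma>2 / 4" for i
    using c[rule_format, of i] g_axis[rule_format, of i] by linarith
  then show ?thesis unfolding R_def[symmetric]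
    using K(1,3-6) K_int \<sigma>2 by (intro exI[of _ K] exI[of _ g]) simp
qed

end
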